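(* In the setting described in the context, assume $G$ satisfies Condition 1. Then for every $r\ge0$ there exists a subset $\mathcal{I}_r$ of the non-faulty agents with $|\mathcal{I}_r|\ge\max\{sp(\mathbf{A}),f+1\}$ such that $\pi_i(r)\ge\beta^{\nu}$ for every $i\in\mathcal{I}_r$.
   Context: A synchronous system of $n$ agents communicates over a directed graph $G=(\mathcal{V},\mathcal{E})$, $\mathcal{V}=\{1,\dots,n\}$, without self-loops; $N_i^-=\{j:(j,i)\in\mathcal{E}\}$. At most $f$ agents are Byzantine faulty (may send arbitrary, possibly inconsistent values); $\mathcal{F}$ is the set of faulty agents, $\phi=|\mathcal{F}|\le f$, and the non-faulty agents are indexed $1,\dots,n-\phi$. An assignment matrix $\mathbf{A}\in\mathbb{R}^{k\times n}$ has nonnegative entries and columns summing to $1$; agent $i$ holds $g_i=\sum_{j=1}^k\mathbf{A}_{ji}h_j$ for admissible (convex, $L$-Lipschitz, nonempty compact argmin) $h_1,\dots,h_k:\mathbb{R}\to\mathbb{R}$. Sparsity parameter $sp(\mathbf{A})$: smallest $s$ such that the sum of any $s$ columns of $\mathbf{A}$ is component-wise positive ($n+1$ if the sum of all columns is not). Reduced graph w.r.t. $\mathcal{F}$: subgraph of $G$ obtained by removing the nodes of $\mathcal{F}$ with their edges and then removing up to $f$ additional incoming edges at each remaining node; $R_{\mathcal{F}}$ is the set of all reduced graphs, $\tau=|R_{\mathcal{F}}|$. A source component of a graph is the set of its nodes each having a directed path to every other node of the graph. Condition 1: for every $\mathcal{F}'\subseteq\mathcal{V}$ with $|\mathcal{F}'|\le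 f$, every reduced graph w.r.t. $\mathcal{F}'$ has a source component with at least $\max\{f+1,sp(\mathbf{A})\}$ nodes. Algorithm 2 (run by non-faulty agents, step sizes $\alpha(t)$): arbitrary $x_i(0)$; in iteration $t\ge1$ agent $i$ sends $x_i(t-1)$ to all out-neighbors, receives a multiset of $|N_i^-|$ values (default value for missing messages), discards the $f$ smallest and $f$ largest values, lets $N_i^*(t)$ be the senders of the remaining values with $w_j$ the value from $j$, sets $w_i=x_i(t-1)$, and updates $x_i(t)=\frac{1}{|N_i^*(t)|+1}\sum_{j\in\{i\}\cup N_i^*(t)}w_j-\alpha(t-1)d_i(t-1)$, with $d_i(t-1)$ a (sub)gradient of $g_i$ at $x_i(t-1)$. Known facts: with $\mathbf{x}(t)\in\mathbb{R}^{n-\phi}$ the non-faulty states and $\mathbf{d}(t)$ the vector of $d_i(t)$, $\mathbf{x}(t+1)=\mathbf{M}(t)\mathbf{x}(t)-\alpha(t)\mathbf{d}(t)$ for row-stochastic $(n-\phi)\times(n-\phi)$ matrices $\mathbf{M}(t)$, and there is a constant $0<\beta<1$ such that for every $t$ some reduced graph $\mathcal{H}(t)\in R_{\mathcal{F}}$ with adjacency matrix $\mathbf{H}(t)$ ($\mathbf{H}_{ij}(t)=1$ if $i=j$ or $(j,i)$ is an edge of $\mathcal{H}(t)$, else $0$) satisfies $\mathbf{M}(t)\ge\beta\mathbf{H}(t)$ entrywise. Let $\Phi(t,r)=\mathbf{M}(t)\cdots\mathbf{M}(r)$ for $t\ge r$ and $\nu=\tau(n-\phi)$. Under Condition 1,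 for each $r$ the limit $\lim_{t\to\infty}\Phi(t,r)=\mathbf{1}\pi(r)$ exists, where $\mathbf{1}$ is the all-ones column vector and $\pi(r)=(\pi_1(r),\dots,\pi_{n-\phi}(r))$ is a stochastic row vector. *)

theory Defs
  imports "HOL-Analysis.Analysis"
begin

text \<open>Agents are 1..n. A graph is an edge set E with (j,i) meaning an edge from j to i.
  Matrices are functions nat => nat => real restricted to an index set.\<close>

definition agents :: "nat \<Rightarrow> nat set" where
  "agents n = {1..n}"

definition sp_cond :: "nat \<Rightarrow> nat \<Rightarrow> (nat \<Rightarrow> nat \<Rightarrow> real) \<Rightarrow> nat \<Rightarrow> bool" where
  "sp_cond k n A s \<longleftrightarrow> (\<forall>S. S \<subseteq> {1..n} \<longrightarrow> card S = s \<longrightarrow> (\<forall>j\<in>{1..k}. 0 < (\<Sum>i\<in>S. A j i)))"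

definition sp :: "nat \<Rightarrow> nat \<Rightarrow> (nat \<Rightarrow> nat \<Rightarrow> real) \<Rightarrow> nat" where
  "sp k n A = (if \<exists>s\<le>n. sp_cond k n A s then (LEAST s. s \<le> n \<and> sp_cond k n A s) else n + 1)"

definition assignment_matrix :: "nat \<Rightarrow> nat \<Rightarrow> (nat \<Rightarrow> nat \<Rightarrow> real) \<Rightarrow> bool" where
  "assignment_matrix k n A \<longleftrightarrow> (\<forall>j\<in>{1..k}. \<forall>i\<in>{1..n}. 0 \<le> A j i) \<and> (\<forall>i\<in>{1..n}. (\<Sum>j\<in>{1..k}. A j i) = 1)"

text \<open>A reduced graph of (V,E) w.r.t. F (with parameter f): node set V - F, edge set H obtained by
  removing the nodes of F with their edges and then at most f further incoming edges at each
  remaining node.\<close>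
definition reduced_graph :: "nat set \<Rightarrow> (nat \<times> nat) set \<Rightarrow> nat \<Rightarrow> nat set \<Rightarrow> (nat \<times> nat) set \<Rightarrow> bool" where
  "reduced_graph V E f F H \<longleftrightarrow>
     H \<subseteq> {(j,i). (j,i) \<in> E \<and> j \<in> V - F \<and> i \<in> V - F} \<and>
     (\<forall>i\<in>V - F. card ({j. (j,i) \<in> E \<and> j \<in> V - F} - {j. (j,i) \<in> H}) \<le> f)"

definition source_component :: "nat set \<Rightarrow> (nat \<times> nat) set \<Rightarrow> nat set" where
  "source_component W H = {u \<in> W. \<forall>v\<in>W. v \<noteq> u \<longrightarrow> (u, v) \<in> H\<^sup>+}"

definition condition1 :: "nat set \<Rightarrow> (nat \<times> nat) set \<Rightarrow> nat \<Rightarrow> nat \<Rightarrow> bool" where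
  "condition1 V E f s \<longleftrightarrow>
     (\<forall>F'. F' \<subseteq> V \<longrightarrow> card F' \<le> f \<longrightarrow>
        (\<forall>H. reduced_graph V E f F' H \<longrightarrow> card (source_component (V - F') H) \<ge> max (f + 1) s))"

definition adj :: "(nat \<times> nat) set \<Rightarrow> nat \<Rightarrow> nat \<Rightarrow> real" where
  "adj H i j = (if i = j \<or> (j, i) \<in> H then 1 else 0)"

definition row_stochastic :: "nat set \<Rightarrow> (nat \<Rightarrow> nat \<Rightarrow> real) \<Rightarrow> bool" where
  "row_stochastic N M \<longleftrightarrow> (\<forall>i\<in>N. \<forall>j\<in>N. 0 \<le> M i j) \<and> (\<forall>i\<in>N. (\<Sum>j\<in>N. M i j) = 1)"

definition mmul :: "nat set \<Rightarrow> (nat \<Rightarrow> nat \<Rightarrow> real) \<Rightarrow> (nat \<Rightarrow> nat \<Rightarrow> real) \<Rightarrow> nat \<Rightarrow> nat \<Rightarrow> real" where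
  "mmul N P Q i j = (\<Sum>l\<in>N. P i l * Q l j)"

text \<open>Phi M N r d = M(r+d) \<cdots> M(r), i.e. \<Phi>(r+d, r).\<close>
fun Phi :: "(nat \<Rightarrow> nat \<Rightarrow> nat \<Rightarrow> real) \<Rightarrow> nat set \<Rightarrow> nat \<Rightarrow> nat \<Rightarrow> nat \<Rightarrow> nat \<Rightarrow> real" where
  "Phi M N r 0 = M r"
| "Phi M N r (Suc d) = mmul N (M (r + Suc d)) (Phi M N r d)"

end

theory Submission
  imports Defs "HOL-Library.FuncSet"
begin

text \<open>Among any \<open>\<tau> m\<close> consecutive steps some reduced graph \<open>H\<close> occurs at least \<open>m = |N|\<close>
  times. Fix \<open>j\<close> in the source component of \<open>H\<close> and track the rows \<open>l\<close> with
  \<open>\<Phi>(r+d,r)\<^sub>l\<^sub>j \<ge> \<beta>\<^sup>d\<^sup>+\<^sup>1\<close>. The diagonal entries of every \<open>M(t)\<close> are at least \<open>\<beta>\<close>, so this set never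
  shrinks; it contains \<open>j\<close>, and whenever \<open>H\<close> occurs an edge of \<open>H\<close> leaving it (which exists
  because \<open>j\<close> reaches every node) adds a new row. After \<open>\<tau> m\<close> steps the whole column \<open>j\<close> is
  therefore at least \<open>\<beta>\<^sup>\<tau>\<^sup>m\<close>, row-stochasticity keeps it there, and so does the limit \<open>\<pi>\<^sub>j(r)\<close>.\<close>

lemma reduced_graph_subset: "reduced_graph V E f F H \<Longrightarrow> H \<subseteq> (V - F) \<times> (V - F)"
  by (auto simp: reduced_graph_def)

lemma finite_reduced_graphs: "finite E \<Longrightarrow> finite {H. reduced_graph V E f F H}"
  by (rule finite_subset[of _ "Pow E"]) (auto simp: reduced_graph_def)

lemma condition1_card_source_component:
  "condition1 V E f s \<Longrightarrow> F \<subseteq> V \<Longrightarrow> card F \<le> f \<Longrightarrow> reduced_graph V E f F H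
    \<Longrightarrow> max (f + 1) s \<le> card (source_component (V - F) H)"
  by (simp add: condition1_def)

lemma source_component_subset: "source_component W H \<subseteq> W"
  by (auto simp: source_component_def)

lemma source_component_edge_leaving:
  assumes H: "H \<subseteq> N \<times> N" and u: "u \<in> source_component N H" and "u \<in> S"
    and "S \<subseteq> N" and "S \<noteq> N"
  obtains q l where "(q, l) \<in> H" "q \<in> S" "l \<in> N" "l \<notin> S"
proof -
  obtain v where v: "v \<in> N" "v \<notin> S" using assms by blast
  with u \<open>u \<in> S\<close> have uv: "(u, v) \<in> H\<^sup>+" unfolding source_component_def by auto
  have "y \<in> S \<or> (\<exists>q l. (q, l) \<in> H \<and> q \<in> S \<and> l \<in> N \<and> l \<notin> S)" if "(u, y) \<in> H\<^sup>+" for y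
    using that
  proof (induction rule: trancl_induct)
    case (base y)
    then show ?case using H \<open>u \<in> S\<close> by blast
  next
    case (step y z)
    then show ?case using H by blast
  qed
  from this[OF uv] v that show ?thesis by blast
qed

lemma pigeonhole_window:
  assumes "finite B" "B \<noteq> {}" "\<And>t. f t \<in> B"
  shows "\<exists>y\<in>B. m \<le> card {t \<in> {r..<r + card B * m}. f t = y}"
proof -
  let ?A = "{r..<r + card B * m}"
  have "f \<in> ?A \<rightarrow> B" using assms(3) by blast
  then obtain y where "y \<in> B" and y: "card ?A \<le> card (f -` {y} \<inter> ?A) * card B"
    using pigeonhole_card[of f ?A B] assms(1,2) by auto
  have "f -` {y} \<inter> ?A = {t \<in> ?A. f t = y}" by auto
  with y have "m * card B \<le> card {t \<in> ?A. f t = y} * card B" by (simp add: mult.commute)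
  moreover have "0 < card B" using assms(1,2) by (simp add: card_gt_0_iff)
  ultimately show ?thesis using \<open>y \<in> B\<close> mult_le_cancel2 by blast
qed

lemma card_filter_insert:
  assumes "finite B" "a \<notin> B"
  shows "card {t \<in> insert a B. P t} = card {t \<in> B. P t} + (if P a then 1 else 0)"
proof (cases "P a")
  case True
  then have "{t \<in> insert a B. P t} = insert a {t \<in> B. P t}" by auto
  then show ?thesis using True assms by simp
next
  case False
  then have "{t \<in> insert a B. P t} = {t \<in> B. P t}" by auto
  then show ?thesis using False by simp
qed

locale dominated_stochastic_chain =
  fixes N :: "nat set" and M :: "nat \<Rightarrow> nat \<Rightarrow> nat \<Rightarrow> real" and \<beta> :: real
    and G :: "nat \<Rightarrow> (nat \<times> nat) set"
  assumes finite_N: "finite N"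
    and stochastic: "row_stochastic N (M t)"
    and beta_nonneg: "0 \<le> \<beta>"
    and M_ge_adj: "i \<in> N \<Longrightarrow> j \<in> N \<Longrightarrow> \<beta> * adj (G t) i j \<le> M t i j"
begin

lemma M_nonneg: "i \<in> N \<Longrightarrow> j \<in> N \<Longrightarrow> 0 \<le> M t i j"
  using stochastic by (simp add: row_stochastic_def)

lemma M_row_sum: "i \<in> N \<Longrightarrow> (\<Sum>j\<in>N. M t i j) = 1"
  using stochastic by (simp add: row_stochastic_def)

lemma M_diag_ge: "i \<in> N \<Longrightarrow> \<beta> \<le> M t i i"
  using M_ge_adj[of i i t] by (simp add: adj_def)

lemma M_edge_ge: "(q, l) \<in> G t \<Longrightarrow> q \<in> N \<Longrightarrow> l \<in> N \<Longrightarrow> \<beta> \<le> M t l q"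
  using M_ge_adj[of l q t] by (simp add: adj_def)

lemma Phi_Suc: "Phi M N r (Suc d) l j = (\<Sum>p\<in>N. M (r + Suc d) l p * Phi M N r d p j)"
  by (simp add: mmul_def)

lemma Phi_nonneg: "i \<in> N \<Longrightarrow> j \<in> N \<Longrightarrow> 0 \<le> Phi M N r d i j"
proof (induction d arbitrary: i)
  case 0
  then show ?case by (simp add: M_nonneg)
next
  case (Suc d)
  then show ?case unfolding Phi_Suc by (auto intro!: sum_nonneg simp: M_nonneg)
qed

lemma Phi_Suc_ge:
  assumes "l \<in> N" "p \<in> N" "j \<in> N"
  shows "M (r + Suc d) l p * Phi M N r d p j \<le> Phi M N r (Suc d) l j"
  unfolding Phi_Suc using assms finite_N
  by (intro member_le_sum) (auto intro!: mult_nonneg_nonneg M_nonneg Phi_nonneg)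

text \<open>Each row of \<open>\<Phi>(r+d+1,r)\<close> is a convex combination of the rows of \<open>\<Phi>(r+d,r)\<close>.\<close>

lemma Phi_column_bound_mono:
  assumes "\<forall>p\<in>N. c \<le> Phi M N r d p j" "d \<le> d'" "l \<in> N"
  shows "c \<le> Phi M N r d' l j"
  using assms(2,3)
proof (induction d' arbitrary: l rule: dec_induct)
  case base
  then show ?case using assms(1) by blast
next
  case (step d')
  have "c = (\<Sum>p\<in>N. M (r + Suc d') l p * c)"
    using M_row_sum[OF step.prems] by (simp add: sum_distrib_right[symmetric])
  also have "\<dots> \<le> Phi M N r (Suc d') l j"
    unfolding Phi_Suc using step.IH step.prems by (intro sum_mono mult_left_mono) (auto simp: M_nonneg)
  finally show ?case .
qed

definition large_rows :: "nat \<Rightarrow> nat \<Rightarrow> nat \<Rightarrow> nat set" where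
  "large_rows r j d = {l \<in> N. \<beta> ^ Suc d \<le> Phi M N r d l j}"

lemma large_rows_subset: "large_rows r j d \<subseteq> N"
  by (auto simp: large_rows_def)

lemma large_rows_Suc:
  assumes "q \<in> large_rows r j d" "l \<in> N" "\<beta> \<le> M (r + Suc d) l q" "j \<in> N"
  shows "l \<in> large_rows r j (Suc d)"
proof -
  have qN: "q \<in> N" using assms(1) large_rows_subset by blast
  have "\<beta> * \<beta> ^ Suc d \<le> M (r + Suc d) l q * Phi M N r d q j"
    using assms beta_nonneg by (intro mult_mono) (auto simp: large_rows_def M_nonneg)
  also have "\<dots> \<le> Phi M N r (Suc d) l j" using Phi_Suc_ge assms qN by blast
  finally show ?thesis using assms(2) by (simp add: large_rows_def)
qed

lemma large_rows_mono: "j \<in> N \<Longrightarrow> large_rows r j d \<subseteq> large_rows r j (Suc d)"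
  using large_rows_Suc M_diag_ge large_rows_subset by blast

lemma in_large_rows: "j \<in> N \<Longrightarrow> j \<in> large_rows r j d"
proof (induction d)
  case 0
  then show ?case using M_diag_ge by (simp add: large_rows_def)
next
  case (Suc d)
  then show ?case using large_rows_mono by blast
qed

lemma large_rows_grows:
  assumes H: "H \<subseteq> N \<times> N" and j: "j \<in> source_component N H"
    and "G (r + Suc d) = H" and "large_rows r j d \<noteq> N"
  shows "card (large_rows r j d) < card (large_rows r j (Suc d))"
proof -
  have jN: "j \<in> N" using j source_component_subset by blast
  obtain q l where ql: "(q, l) \<in> H" "q \<in> large_rows r j d" "l \<in> N" "l \<notin> large_rows r j d"
    using source_component_edge_leaving[OF H j in_large_rows[OF jN] large_rows_subset assms(4)] .
  have "\<beta> \<le> M (r + Suc d) l q"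
    using M_edge_ge ql H assms(3) by blast
  then have "l \<in> large_rows r j (Suc d)"
    using large_rows_Suc ql jN by blast
  then have "insert l (large_rows r j d) \<subseteq> large_rows r j (Suc d)"
    using large_rows_mono[OF jN] by blast
  then have "card (insert l (large_rows r j d)) \<le> card (large_rows r j (Suc d))"
    by (rule card_mono[OF finite_subset[OF large_rows_subset finite_N]])
  then show ?thesis using ql(4) finite_subset[OF large_rows_subset finite_N] by simp
qed

lemma card_large_rows_ge:
  assumes H: "H \<subseteq> N \<times> N" and j: "j \<in> source_component N H"
  shows "min (card N) (card {t \<in> {r..r + d}. G t = H}) \<le> card (large_rows r j d)"
proof (induction d)
  case 0
  have jN: "j \<in> N" using j source_component_subset by blast
  have "{t \<in> {r..r + 0}. G t = H} \<subseteq> {r}" by auto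
  then have "card {t \<in> {r..r + 0}. G t = H} \<le> 1" using card_mono[of "{r}"] by simp
  moreover have "0 < card (large_rows r j 0)"
    using in_large_rows[OF jN, of r 0] finite_subset[OF large_rows_subset finite_N] card_gt_0_iff
    by blast
  ultimately show ?case by linarith
next
  case (Suc d)
  let ?S = "large_rows r j" and ?occ = "\<lambda>d. card {t \<in> {r..r + d}. G t = H}"
  have jN: "j \<in> N" using j source_component_subset by blast
  have mono: "card (?S d) \<le> card (?S (Suc d))"
    by (rule card_mono[OF finite_subset[OF large_rows_subset finite_N] large_rows_mono[OF jN]])
  have "{r..r + Suc d} = insert (r + Suc d) {r..r + d}" by auto
  then have occ: "?occ (Suc d) = ?occ d + (if G (r + Suc d) = H then 1 else 0)"
    using card_filter_insert[of "{r..r + d}" "r + Suc d"] by simp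
  consider (other) "G (r + Suc d) \<noteq> H" | (full) "?S d = N" | (grow) "G (r + Suc d) = H" "?S d \<noteq> N"
    by blast
  then show ?case
  proof cases
    case other
    then have "?occ (Suc d) = ?occ d" using occ by simp
    with Suc.IH mono show ?thesis by linarith
  next
    case full
    then have "?S (Suc d) = N" using large_rows_mono[OF jN, of r d] large_rows_subset by blast
    then show ?thesis by simp
  next
    case grow
    then have "?occ (Suc d) = ?occ d + 1" using occ by simp
    moreover have "card (?S d) < card (?S (Suc d))" by (rule large_rows_grows[OF H j grow])
    ultimately show ?thesis using Suc.IH by linarith
  qed
qed

lemma source_column_limit_ge:
  assumes H: "H \<subseteq> N \<times> N" and j: "j \<in> source_component N H"
    and occ: "card N \<le> card {t \<in> {r..<r + \<nu>}. G t = H}"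
    and lim: "(\<lambda>d. Phi M N r d j j) \<longlonglongrightarrow> p"
  shows "\<beta> ^ \<nu> \<le> p"
proof -
  have jN: "j \<in> N" using j source_component_subset by blast
  then have "0 < card N" using finite_N card_gt_0_iff by blast
  with occ obtain d where \<nu>: "\<nu> = Suc d" by (cases \<nu>) auto
  then have "{r..<r + \<nu>} = {r..r + d}" by auto
  with occ card_large_rows_ge[OF H j, of r d]
  have "card N \<le> card (large_rows r j d)" by simp
  then have "large_rows r j d = N"
    by (rule card_seteq[OF finite_N large_rows_subset])
  then have "\<forall>l\<in>N. \<beta> ^ \<nu> \<le> Phi M N r d l j"
    unfolding large_rows_def \<nu> by blast
  then have "\<forall>d'\<ge>d. \<beta> ^ \<nu> \<le> Phi M N r d' j j"
    using Phi_column_bound_mono jN by blast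
  then show ?thesis by (intro LIMSEQ_le_const[OF lim] exI)
qed

end

theorem lemma3:
  fixes n k f :: nat and E :: "(nat \<times> nat) set" and A :: "nat \<Rightarrow> nat \<Rightarrow> real"
    and F :: "nat set" and M :: "nat \<Rightarrow> nat \<Rightarrow> nat \<Rightarrow> real" and \<beta> :: real
    and \<pi> :: "nat \<Rightarrow> nat \<Rightarrow> real"
  assumes E_sub: "E \<subseteq> agents n \<times> agents n"
    and no_loops: "\<forall>i. (i, i) \<notin> E"
    and A_assign: "assignment_matrix k n A"
    and F_sub: "F \<subseteq> agents n" and F_card: "card F \<le> f"
    and cond1: "condition1 (agents n) E f (sp k n A)"
    and M_stoch: "\<forall>t. row_stochastic (agents n - F) (M t)"
    and beta: "0 < \<beta>" "\<beta> < 1"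
    and M_lower: "\<forall>t. \<exists>H. reduced_graph (agents n) E f F H \<and>
                     (\<forall>i\<in>agents n - F. \<forall>j\<in>agents n - F. M t i j \<ge> \<beta> * adj H i j)"
    and limit: "\<forall>r. \<forall>i\<in>agents n - F. \<forall>j\<in>agents n - F.
                     (\<lambda>d. Phi M (agents n - F) r d i j) \<longlonglongrightarrow> \<pi> r j"
  shows "\<forall>r. \<exists>I. I \<subseteq> agents n - F \<and> card I \<ge> max (sp k n A) (f + 1) \<and>
           (\<forall>i\<in>I. \<pi> r i \<ge> \<beta> ^ (card {H. reduced_graph (agents n) E f F H} * (n - card F)))"
proof
  fix r
  define N where "N = agents n - F"
  define R where "R = {H. reduced_graph (agents n) E f F H}"
  obtain G where G: "\<forall>t. reduced_graph (agents n) E f F (G t) \<and>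
                       (\<forall>i\<in>N. \<forall>j\<in>N. \<beta> * adj (G t) i j \<le> M t i j)"
    using choice[OF M_lower] unfolding N_def by blast
  have "finite N" by (simp add: N_def agents_def)
  then interpret dominated_stochastic_chain N M \<beta> G
    using M_stoch beta G by unfold_locales (simp_all add: N_def)
  have "finite R"
    unfolding R_def by (rule finite_reduced_graphs[OF finite_subset[OF E_sub]]) (simp add: agents_def)
  then obtain H where H: "reduced_graph (agents n) E f F H"
    and occ: "card N \<le> card {t \<in> {r..<r + card R * card N}. G t = H}"
    using pigeonhole_window[of R G "card N" r] G unfolding R_def by blast
  have card_N: "n - card F = card N"
    using F_sub by (simp add: N_def agents_def card_Diff_subset finite_subset)
  show "\<exists>I. I \<subseteq> agents n - F \<and> card I \<ge> max (sp k n A) (f + 1) \<and>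
           (\<forall>i\<in>I. \<pi> r i \<ge> \<beta> ^ (card R * (n - card F)))"
  proof (intro exI conjI ballI)
    show "source_component N H \<subseteq> agents n - F" using source_component_subset N_def by blast
    show "max (sp k n A) (f + 1) \<le> card (source_component N H)"
      using condition1_card_source_component[OF cond1 F_sub F_card H] by (simp add: N_def max.commute)
    fix i assume i: "i \<in> source_component N H"
    then have lim: "(\<lambda>d. Phi M N r d i i) \<longlonglongrightarrow> \<pi> r i"
      using limit source_component_subset N_def by blast
    have "H \<subseteq> N \<times> N" using reduced_graph_subset[OF H] by (simp add: N_def)
    then show "\<beta> ^ (card R * (n - card F)) \<le> \<pi> r i"
      unfolding card_N by (rule source_column_limit_ge[OF _ i occ lim])
  qed
qed

end
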